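(* Let $Y$ be a locally compact second countable metric space with a continuous action of $G=\mathrm{SL}_d(\mathbb R)$, let $Y'\subset Y$ be a closed $G$-invariant subset, $0<q<p\le1$ and $y\in Y\setminus Y'$. If $x\in\mathrm{Div}(y,Y',p)$, then for every compact $K\subset Y\setminus Y'$ and every $t>1$ there exists $N$ such that for every integer $M>N$, $$\frac1M\#\{l\in[1,M]\cap\mathbb N:\ g_t^lu(x)y\notin K\}\ge q.$$
   Context: $d=m+n$; $a_1,\dots,a_m>0$, $b_1,\dots,b_n>0$ with $\sum a_i=\sum b_j=1$; $g_t=\mathrm{diag}(t^{a_1},\dots,t^{a_m},t^{-b_1},\dots,t^{-b_n})$ for $t>0$ and $u(x)=\begin{pmatrix}I_m&x\\0&I_n\end{pmatrix}$ for $x\in M_{m\times n}(\mathbb R)$. For $Y,Y'$ as in the claim, $y\in Y\setminus Y'$ and $0<p\le1$, $\mathrm{Div}(y,Y',p)$ is the set of $x\in M_{m\times n}(\mathbb R)$ such that for every compact $K\subset Y\setminus Y'$, $\liminf_{T\to\infty}\frac1T\int_0^T\mathbf 1[g_{e^t}u(x)y\in Y\setminus K]\,dt\ge p$. *)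

theory Defs
  imports "HOL-Analysis.Analysis"
begin

text \<open>Index type of R^d, d = m + n, is the sum type 'm + 'n (Inl = first m coordinates).\<close>

definition SLd :: "(real^'d::finite^'d) set" where
  "SLd = {g. det g = 1}"

definition gflow :: "('m::finite \<Rightarrow> real) \<Rightarrow> ('n::finite \<Rightarrow> real) \<Rightarrow> real \<Rightarrow> real^('m + 'n)^('m + 'n)" where
  "gflow a b t = (\<chi> i j. if i = j then (case i of Inl k \<Rightarrow> t powr a k | Inr k \<Rightarrow> t powr (- b k)) else 0)"

definition umat :: "real^'n::finite^'m::finite \<Rightarrow> real^('m + 'n)^('m + 'n)" where
  "umat x = (\<chi> i j. if i = j then 1 else
      (case (i, j) of (Inl k, Inr l) \<Rightarrow> x $ k $ l | _ \<Rightarrow> 0))"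

fun matpow :: "real^'d::finite^'d \<Rightarrow> nat \<Rightarrow> real^'d^'d" where
  "matpow A 0 = mat 1"
| "matpow A (Suc l) = A ** matpow A l"

definition continuous_SL_action :: "(real^'d::finite^'d \<Rightarrow> 'y::topological_space \<Rightarrow> 'y) \<Rightarrow> bool" where
  "continuous_SL_action act \<longleftrightarrow>
     (\<forall>y. act (mat 1) y = y) \<and>
     (\<forall>g\<in>SLd. \<forall>h\<in>SLd. \<forall>y. act (g ** h) y = act g (act h y)) \<and>
     continuous_on (SLd \<times> UNIV) (\<lambda>(g, y). act g y)"

definition Div ::
  "(real^('m::finite+'n::finite)^('m+'n) \<Rightarrow> 'y::topological_space \<Rightarrow> 'y) \<Rightarrow> ('m \<Rightarrow> real) \<Rightarrow> ('n \<Rightarrow> real)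
    \<Rightarrow> 'y \<Rightarrow> 'y set \<Rightarrow> real \<Rightarrow> (real^'n^'m) set" where
  "Div act a b y Y' p = {x. \<forall>K. compact K \<and> K \<subseteq> UNIV - Y' \<longrightarrow>
      Liminf at_top (\<lambda>T::real. ereal ((1 / T) *
         (LBINT t=0..T. indicator (UNIV - K) (act (gflow a b (exp t) ** umat x) y) :: real)))
      \<ge> ereal p}"

end

theory Submission
  imports Defs
begin

text \<open>Put \<open>\<tau> = ln t\<close> and sweep the compact set \<open>K\<close> by the flow for times \<open>[0, \<tau>]\<close>;
the result \<open>K'\<close> is compact and still avoids the invariant set \<open>Y'\<close>. Whenever the
\<open>l\<close>-th discrete point \<open>g\<^sub>t\<^sup>l u(x) y\<close> lies in \<open>K\<close>, the continuous orbit stays in \<open>K'\<close>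
during the whole time interval \<open>[l\<tau>, (l+1)\<tau>]\<close>. Hence the time the continuous orbit
spends outside \<open>K'\<close> up to \<open>(M+1)\<tau>\<close> is at most \<open>\<tau>\<close> times the number of \<open>l \<le> M\<close> with
\<open>g\<^sub>t\<^sup>l u(x) y \<notin> K\<close>. Applying the divergence hypothesis to \<open>K'\<close> with a level strictly
between \<open>q\<close> and \<open>p\<close> absorbs the error terms for large \<open>M\<close>.\<close>

lemma gflow_mult:
  assumes "u > 0" "v > 0"
  shows "gflow a b u ** gflow a b v = gflow a b (u * v)"
proof -
  have "(gflow a b u ** gflow a b v) $ i $ j = gflow a b (u * v) $ i $ j" for i j
  proof -
    have "(gflow a b u ** gflow a b v) $ i $ j = (\<Sum>k\<in>UNIV. gflow a b u $ i $ k * gflow a b v $ k $ j)"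
      by (simp add: matrix_matrix_mult_def)
    also have "\<dots> = gflow a b u $ i $ i * gflow a b v $ i $ j"
      by (subst sum.remove[of _ i]) (auto simp: gflow_def)
    also have "\<dots> = gflow a b (u * v) $ i $ j"
      using assms by (auto simp: gflow_def powr_mult split: sum.splits)
    finally show ?thesis .
  qed
  then show ?thesis by (simp add: vec_eq_iff)
qed

lemma gflow_one: "gflow a b 1 = mat 1"
  by (simp add: gflow_def mat_def vec_eq_iff split: sum.splits)

lemma matpow_gflow:
  assumes "t > 0"
  shows "matpow (gflow a b t) l = gflow a b (t ^ l)"
  using assms by (induction l) (auto simp: gflow_one gflow_mult)

lemma continuous_on_gflow_exp: "continuous_on S (\<lambda>r. gflow a b (exp r))"
  unfolding gflow_def
proof (intro continuous_on_vec_lambda)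
  show "continuous_on S (\<lambda>r. if i = j then (case i of Inl k \<Rightarrow> exp r powr a k
          | Inr k \<Rightarrow> exp r powr - b k) else 0)" for i j
    by (cases i; cases "i = j") (auto simp: powr_def intro!: continuous_intros)
qed

lemma SLd_mult: "g \<in> SLd \<Longrightarrow> h \<in> SLd \<Longrightarrow> g ** h \<in> SLd"
  by (simp add: SLd_def det_mul)

lemma gflow_in_SLd:
  fixes a :: "'m::finite \<Rightarrow> real" and b :: "'n::finite \<Rightarrow> real"
  assumes "u > 0" "sum a UNIV = 1" "sum b UNIV = 1"
  shows "gflow a b u \<in> SLd"
proof -
  have "det (gflow a b u) = (\<Prod>i\<in>UNIV. gflow a b u $ i $ i)"
    by (rule det_diagonal) (simp add: gflow_def)
  also have "\<dots> = (\<Prod>i\<in>(UNIV::'m set) <+> (UNIV::'n set). gflow a b u $ i $ i)"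
    by simp
  also have "\<dots> = (\<Prod>k\<in>UNIV. u powr a k) * (\<Prod>k\<in>UNIV. u powr (- b k))"
    by (subst prod.Plus) (auto simp: gflow_def o_def)
  also have "\<dots> = u powr (sum a UNIV) * u powr (sum (\<lambda>k. - b k) UNIV)"
    using powr_sum[of u a UNIV] powr_sum[of u "\<lambda>k. - b k" UNIV] assms by simp
  also have "\<dots> = 1" using assms by (simp add: sum_negf powr_minus)
  finally show ?thesis by (simp add: SLd_def)
qed

text \<open>Only the identity term of the Leibniz formula survives: a nonzero entry in row
\<open>Inr j\<close> forces \<open>p (Inr j) = Inr j\<close>, so a moved index \<open>Inl k\<close> would have to go to an
already occupied \<open>Inr l\<close>.\<close>

lemma umat_in_SLd: "umat (x :: real^'n::finite^'m::finite) \<in> SLd"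
proof -
  let ?A = "umat x"
  let ?U = "UNIV :: ('m + 'n) set"
  let ?term = "\<lambda>p. of_int (sign p) * (\<Prod>i\<in>?U. ?A $ i $ p i)"
  have other_terms_vanish: "?term p = 0" if p: "p permutes ?U" "p \<noteq> id" for p
  proof -
    have "\<exists>i. ?A $ i $ p i = 0"
    proof (rule ccontr)
      assume "\<nexists>i. ?A $ i $ p i = 0"
      then have nz: "\<And>i. ?A $ i $ p i \<noteq> 0" by blast
      have fix_Inr: "p (Inr j) = Inr j" for j
        using nz[of "Inr j"] by (auto simp: umat_def split: if_splits sum.splits prod.splits)
      obtain i where i: "p i \<noteq> i" using p by fastforce
      then obtain k l where "i = Inl k" "p i = Inr l"
        using nz[of i] by (auto simp: umat_def split: if_splits sum.splits prod.splits)
      then have "p (Inl k) = p (Inr l)" using fix_Inr by simp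
      then show False using permutes_inj[OF p(1)] by (auto dest: injD)
    qed
    then show ?thesis by (metis finite prod_zero mult_zero_right UNIV_I)
  qed
  have "det ?A = (\<Sum>p\<in>{p. p permutes ?U}. ?term p)" by (simp add: det_def)
  also have "\<dots> = ?term id + (\<Sum>p\<in>{p. p permutes ?U} - {id}. ?term p)"
    by (rule sum.remove) (auto simp: finite_permutations permutes_id)
  also have "\<dots> = ?term id"
    using other_terms_vanish by (simp add: sum.neutral)
  also have "\<dots> = 1" by (simp add: sign_id umat_def)
  finally show ?thesis by (simp add: SLd_def)
qed

lemma compact_action_image:
  assumes "continuous_SL_action act" "continuous_on S \<gamma>" "\<gamma> ` S \<subseteq> SLd"
    and "compact S" "compact K"
  shows "compact ((\<lambda>(s, k). act (\<gamma> s) k) ` (S \<times> K))"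
proof -
  have act_cont: "continuous_on (SLd \<times> UNIV) (\<lambda>(g, y). act g y)"
    using assms(1) by (simp add: continuous_SL_action_def)
  have "continuous_on (S \<times> K) (\<lambda>(s, k). (\<gamma> s, k))"
    unfolding case_prod_unfold
    by (intro continuous_on_Pair continuous_on_snd continuous_on_compose2[OF assms(2)]
        continuous_on_fst) auto
  moreover have "(\<lambda>(s, k). (\<gamma> s, k)) ` (S \<times> K) \<subseteq> SLd \<times> UNIV"
    using assms(3) by auto
  ultimately have "continuous_on (S \<times> K) (\<lambda>z. (\<lambda>(g, y). act g y) ((\<lambda>(s, k). (\<gamma> s, k)) z))"
    by (rule continuous_on_compose2[OF act_cont])
  then have "compact ((\<lambda>z. (\<lambda>(g, y). act g y) ((\<lambda>(s, k). (\<gamma> s, k)) z)) ` (S \<times> K))"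
    using assms(4,5) by (intro compact_continuous_image compact_Times)
  then show ?thesis by (simp add: case_prod_unfold)
qed

lemma action_preserves_complement_of_invariant:
  assumes "continuous_SL_action act" "\<forall>g\<in>SLd. \<forall>z\<in>Y'. act g z \<in> Y'"
    and "g \<in> SLd" "h \<in> SLd" "h ** g = mat 1" "k \<notin> Y'"
  shows "act g k \<notin> Y'"
proof
  assume "act g k \<in> Y'"
  then have "act h (act g k) \<in> Y'" using assms(2,4) by blast
  also have "act h (act g k) = act (h ** g) k"
    using assms(1,3,4) by (simp add: continuous_SL_action_def)
  also have "\<dots> = k"
    using assms(1,5) by (simp add: continuous_SL_action_def)
  finally show False using assms(6) by contradiction
qed

definition gflow_sweep ::
  "(real^('m::finite+'n::finite)^('m+'n) \<Rightarrow> 'y \<Rightarrow> 'y) \<Rightarrow> ('m \<Rightarrow> real) \<Rightarrow> ('n \<Rightarrow> real)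
    \<Rightarrow> real \<Rightarrow> 'y set \<Rightarrow> 'y set" where
  "gflow_sweep act a b \<tau> K = (\<lambda>(r, k). act (gflow a b (exp r)) k) ` ({0..\<tau>} \<times> K)"

lemma compact_gflow_sweep:
  assumes "continuous_SL_action act" "sum a UNIV = 1" "sum b UNIV = 1" "compact K"
  shows "compact (gflow_sweep act a b \<tau> K)"
  unfolding gflow_sweep_def
  using assms gflow_in_SLd[OF exp_gt_zero]
  by (intro compact_action_image continuous_on_gflow_exp) auto

lemma gflow_sweep_avoids_invariant:
  assumes "continuous_SL_action act" "\<forall>g\<in>SLd. \<forall>z\<in>Y'. act g z \<in> Y'"
    and "sum a UNIV = 1" "sum b UNIV = 1" "K \<subseteq> UNIV - Y'"
  shows "gflow_sweep act a b \<tau> K \<subseteq> UNIV - Y'"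
proof
  fix w assume "w \<in> gflow_sweep act a b \<tau> K"
  then obtain r k where k: "k \<in> K" and w: "w = act (gflow a b (exp r)) k"
    by (auto simp: gflow_sweep_def)
  have "act (gflow a b (exp r)) k \<notin> Y'"
  proof (rule action_preserves_complement_of_invariant[OF assms(1,2)])
    show "gflow a b (exp r) \<in> SLd" "gflow a b (exp (- r)) \<in> SLd"
      using assms(3,4) by (simp_all add: gflow_in_SLd)
    show "gflow a b (exp (- r)) ** gflow a b (exp r) = mat 1"
      by (simp add: gflow_mult gflow_one flip: exp_add)
    show "k \<notin> Y'" using k assms(5) by blast
  qed
  then show "w \<in> UNIV - Y'" using w by simp
qed

lemma gflow_orbit_in_sweep:
  assumes "continuous_SL_action act" "sum a UNIV = 1" "sum b UNIV = 1" "t > 1" "h \<in> SLd"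
    and "act (matpow (gflow a b t) l ** h) y \<in> K"
    and "real l * ln t \<le> s" "s \<le> (real l + 1) * ln t"
  shows "act (gflow a b (exp s) ** h) y \<in> gflow_sweep act a b (ln t) K"
proof -
  define r where "r = s - real l * ln t"
  have r: "r \<in> {0..ln t}" using assms(7,8) by (auto simp: r_def algebra_simps)
  have "exp s = exp r * t ^ l"
    using assms(4) by (simp add: r_def exp_diff exp_of_nat_mult)
  then have "gflow a b (exp s) ** h = gflow a b (exp r) ** (matpow (gflow a b t) l ** h)"
    using assms(4) by (simp add: gflow_mult matpow_gflow matrix_mul_assoc)
  moreover have "gflow a b (exp r) \<in> SLd" "matpow (gflow a b t) l ** h \<in> SLd"
    using assms(2-5) by (simp_all add: matpow_gflow gflow_in_SLd SLd_mult)
  ultimately have "act (gflow a b (exp s) ** h) y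
      = act (gflow a b (exp r)) (act (matpow (gflow a b t) l ** h) y)"
    using assms(1) unfolding continuous_SL_action_def by metis
  then show ?thesis using r assms(6) by (auto simp: gflow_sweep_def)
qed

lemma step_interval_cover:
  assumes "\<tau> > 0" "0 \<le> s" "s \<le> (real M + 1) * \<tau>"
  obtains l where "l \<le> M" "real l * \<tau> \<le> s" "s \<le> (real l + 1) * \<tau>"
proof -
  define u where "u = s / \<tau>"
  have u: "0 \<le> u" "u \<le> real M + 1"
    using assms by (simp_all add: u_def pos_divide_le_eq)
  define l where "l = min M (nat \<lfloor>u\<rfloor>)"
  have "real l \<le> u" "u \<le> real l + 1"
    using u by (auto simp: l_def min_def) linarith+
  then show thesis
    using assms(1) by (intro that[of l]) (auto simp: l_def u_def pos_le_divide_eq pos_divide_le_eq)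
qed

lemma interval_integral_le_step_sum:
  fixes f :: "real \<Rightarrow> real" and c :: "nat \<Rightarrow> real"
  assumes "\<tau> > 0" "\<And>l. 0 \<le> c l"
    and "\<And>l s. l \<le> M \<Longrightarrow> real l * \<tau> \<le> s \<Longrightarrow> s \<le> (real l + 1) * \<tau> \<Longrightarrow> f s \<le> c l"
  shows "(LBINT s=0..(real M + 1) * \<tau>. f s) \<le> \<tau> * (\<Sum>l\<le>M. c l)"
proof -
  define T where "T = (real M + 1) * \<tau>"
  define g where "g s = (\<Sum>l\<le>M. c l * indicator {real l * \<tau>..(real l + 1) * \<tau>} s)" for s
  have integrable_pieces: "integrable lborel (\<lambda>s. c l * indicator {real l * \<tau>..(real l + 1) * \<tau>} s :: real)" for l
    by (intro integrable_mult_right integrable_real_indicator) (auto simp: emeasure_lborel_Icc_eq)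
  have integrable_g: "integrable lborel g"
    unfolding g_def by (intro Bochner_Integration.integrable_sum integrable_pieces)
  have g_nonneg: "0 \<le> g s" for s
    unfolding g_def using assms(2) by (auto intro!: sum_nonneg)
  have "integral\<^sup>L lborel g
      = (\<Sum>l\<le>M. integral\<^sup>L lborel (\<lambda>s. c l * indicator {real l * \<tau>..(real l + 1) * \<tau>} s))"
    unfolding g_def by (intro Bochner_Integration.integral_sum integrable_pieces)
  also have "\<dots> = (\<Sum>l\<le>M. c l * \<tau>)"
    using assms(1) by (intro sum.cong) (simp_all add: algebra_simps)
  also have "\<dots> = \<tau> * (\<Sum>l\<le>M. c l)" by (simp add: sum_distrib_left mult.commute)
  finally have integral_g: "integral\<^sup>L lborel g = \<tau> * (\<Sum>l\<le>M. c l)" .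
  have f_le_g: "indicator {0..T} s *\<^sub>R f s \<le> g s" for s
  proof (cases "s \<in> {0..T}")
    case True
    then obtain l where l: "l \<le> M" "real l * \<tau> \<le> s" "s \<le> (real l + 1) * \<tau>"
      using step_interval_cover[OF assms(1)] by (auto simp: T_def)
    then have "c l * indicator {real l * \<tau>..(real l + 1) * \<tau>} s \<le> g s"
      unfolding g_def using assms(2) by (intro member_le_sum) auto
    then show ?thesis using True l assms(3)[of l s] by simp
  qed (simp add: g_nonneg)
  have "(LBINT s=0..T. f s) = integral\<^sup>L lborel (\<lambda>s. indicator {0..T} s *\<^sub>R f s)"
    using assms(1) by (simp add: interval_integral_Icc T_def set_lebesgue_integral_def zero_ereal_def)
  also have "\<dots> \<le> integral\<^sup>L lborel g"
  proof (cases "integrable lborel (\<lambda>s. indicator {0..T} s *\<^sub>R f s)")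
    case True
    then show ?thesis using integrable_g f_le_g by (intro integral_mono)
  qed (simp add: not_integrable_integral_eq integral_nonneg g_nonneg)
  finally show ?thesis using integral_g by (simp add: T_def)
qed

lemma time_outside_gflow_sweep_le:
  assumes "continuous_SL_action act" "sum a UNIV = 1" "sum b UNIV = 1" "t > 1" "h \<in> SLd"
  shows "(LBINT s=0..(real M + 1) * ln t. indicator (UNIV - gflow_sweep act a b (ln t) K)
             (act (gflow a b (exp s) ** h) y) :: real)
         \<le> ln t * (\<Sum>l\<le>M. indicator (UNIV - K) (act (matpow (gflow a b t) l ** h) y))"
proof (rule interval_integral_le_step_sum)
  fix l s assume "real l * ln t \<le> s" "s \<le> (real l + 1) * ln t"
  then show "indicator (UNIV - gflow_sweep act a b (ln t) K) (act (gflow a b (exp s) ** h) y)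
      \<le> (indicator (UNIV - K) (act (matpow (gflow a b t) l ** h) y) :: real)"
    using gflow_orbit_in_sweep[OF assms] by (auto simp: indicator_def)
qed (use assms(4) in auto)

lemma sum_indicator_le_one_plus_card:
  fixes M :: nat
  shows "(\<Sum>l\<le>M. indicator (UNIV - K) (z l) :: real) \<le> 1 + real (card {l\<in>{1..M}. z l \<notin> K})"
proof -
  have "{..M} = insert 0 {1..M}" by auto
  then have "(\<Sum>l\<le>M. indicator (UNIV - K) (z l) :: real)
      = indicator (UNIV - K) (z 0) + (\<Sum>l\<in>{1..M}. indicator (UNIV - K) (z l))"
    by simp
  also have "(\<Sum>l\<in>{1..M}. indicator (UNIV - K) (z l) :: real) = real (card {l\<in>{1..M}. z l \<notin> K})"
    using sum_indicator_eq_card[of "{1..M}" "{l. z l \<notin> K}"]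
    by (simp add: indicator_def Int_def conj_commute)
  finally show ?thesis by (simp add: indicator_def)
qed

lemma eventually_frequency_ge:
  fixes A :: "real \<Rightarrow> real" and C :: "nat \<Rightarrow> real"
  assumes "\<tau> > 0" "0 < q" "q < r"
    and "\<forall>\<^sub>F T in at_top. r < (1 / T) * A T"
    and "\<And>M. A ((real M + 1) * \<tau>) \<le> \<tau> * (1 + C M)"
  shows "\<forall>\<^sub>F M in sequentially. q \<le> C M / real M"
proof -
  have "filterlim (\<lambda>M. real M + 1) at_top sequentially"
    using filterlim_tendsto_add_at_top[OF tendsto_const filterlim_real_sequentially]
    by (simp add: add.commute)
  then have "filterlim (\<lambda>M. (real M + 1) * \<tau>) at_top sequentially"
    using assms(1) by (intro filterlim_at_top_mult_tendsto_pos[OF tendsto_const])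
  with assms(4) have "\<forall>\<^sub>F M in sequentially. r < (1 / ((real M + 1) * \<tau>)) * A ((real M + 1) * \<tau>)"
    by (rule eventually_compose_filterlim)
  moreover have "\<forall>\<^sub>F M in sequentially. 1 / (r - q) \<le> real M"
    by (rule eventually_compose_filterlim[OF eventually_ge_at_top filterlim_real_sequentially])
  ultimately show ?thesis
  proof eventually_elim
    case (elim M)
    have "(1 / ((real M + 1) * \<tau>)) * A ((real M + 1) * \<tau>) \<le> (1 / ((real M + 1) * \<tau>)) * (\<tau> * (1 + C M))"
      using assms(1) by (intro mult_left_mono assms(5)) simp
    then have "r < (1 / ((real M + 1) * \<tau>)) * (\<tau> * (1 + C M))"
      using elim(1) by linarith
    also have "\<dots> = (1 + C M) / (real M + 1)"
      using assms(1) by simp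
    finally have "r * (real M + 1) < 1 + C M"
      by (simp add: pos_less_divide_eq)
    moreover have "1 \<le> real M * (r - q)"
      using elim(2) assms(3) by (simp add: field_simps)
    ultimately have "q * real M \<le> C M"
      using assms(2,3) by (simp add: algebra_simps)
    moreover have "0 < 1 / (r - q)" using assms(3) by simp
    then have "real M > 0" using elim(2) by linarith
    ultimately show ?case by (simp add: field_simps)
  qed
qed

theorem lemma6p3:
  fixes act :: "real^('m::finite + 'n::finite)^('m + 'n) \<Rightarrow> 'y::{metric_space, second_countable_topology} \<Rightarrow> 'y"
    and a :: "'m \<Rightarrow> real" and b :: "'n \<Rightarrow> real"
    and Y' :: "'y set" and y :: 'y and p q :: real and x :: "real^'n^'m"
  assumes "\<forall>i. a i > 0" and "(\<Sum>i\<in>UNIV. a i) = 1"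
    and "\<forall>j. b j > 0" and "(\<Sum>j\<in>UNIV. b j) = 1"
    and "locally compact (UNIV :: 'y set)"
    and "continuous_SL_action act"
    and "closed Y'" and "\<forall>g\<in>SLd. \<forall>z\<in>Y'. act g z \<in> Y'"
    and "0 < q" and "q < p" and "p \<le> 1"
    and "y \<notin> Y'"
    and "x \<in> Div act a b y Y' p"
  shows "\<forall>K t. compact K \<and> K \<subseteq> UNIV - Y' \<and> t > 1 \<longrightarrow>
     (\<exists>N::nat. \<forall>M::nat. M > N \<longrightarrow>
        real (card {l\<in>{1..M}. act (matpow (gflow a b t) l ** umat x) y \<notin> K}) / real M \<ge> q)"
proof (intro allI impI, elim conjE)
  fix K and t :: real
  assume K: "compact K" "K \<subseteq> UNIV - Y'" and t: "t > 1"
  define K' where "K' = gflow_sweep act a b (ln t) K"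
  define A where "A T = (LBINT s=0..T. indicator (UNIV - K') (act (gflow a b (exp s) ** umat x) y) :: real)"
    for T :: real
  define C where "C M = real (card {l\<in>{1..M}. act (matpow (gflow a b t) l ** umat x) y \<notin> K})"
    for M
  have "compact K'" "K' \<subseteq> UNIV - Y'"
    unfolding K'_def using assms(2,4,6,8) K by (simp_all add: compact_gflow_sweep gflow_sweep_avoids_invariant)
  then have "ereal p \<le> Liminf at_top (\<lambda>T. ereal ((1 / T) * A T))"
    using assms(13) by (simp add: Div_def A_def)
  moreover have "ereal ((p + q) / 2) < ereal p"
    using assms(10) by simp
  ultimately have "ereal ((p + q) / 2) < Liminf at_top (\<lambda>T. ereal ((1 / T) * A T))"
    by (rule less_le_trans[rotated])
  then have "\<forall>\<^sub>F T in at_top. (p + q) / 2 < (1 / T) * A T"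
    by (auto dest: less_LiminfD)
  moreover have "A ((real M + 1) * ln t) \<le> ln t * (1 + C M)" for M
  proof -
    have "A ((real M + 1) * ln t)
        \<le> ln t * (\<Sum>l\<le>M. indicator (UNIV - K) (act (matpow (gflow a b t) l ** umat x) y))"
      unfolding A_def K'_def by (rule time_outside_gflow_sweep_le[OF assms(6,2,4) t umat_in_SLd])
    also have "\<dots> \<le> ln t * (1 + C M)"
      unfolding C_def using t by (intro mult_left_mono sum_indicator_le_one_plus_card) simp
    finally show ?thesis .
  qed
  ultimately have "\<forall>\<^sub>F M in sequentially. q \<le> C M / real M"
    using t assms(9,10) by (intro eventually_frequency_ge[where r = "(p + q) / 2" and \<tau> = "ln t"]) auto
  then show "\<exists>N. \<forall>M>N. q \<le> real (card {l \<in> {1..M}. act (matpow (gflow a b t) l ** umat x) y \<notin> K}) / real M"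
    unfolding eventually_sequentially C_def by (meson less_imp_le)
qed

end
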